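(* Let $\langle A,f,g\rangle$ be a binary PS-algebra and define $d\colon A\to A$ by $d(a)=f(a,a)+-g(a,a)$. Then $d$ is the unary discriminator on $A$ (i.e. $d(0)=0$ and $d(a)=1$ for all $a\neq0$) if and only if for all $a,b\in A$, $a\cdot b\neq0$ implies $g(a,b)\leq f(a,b)$.
   Context: A PS-algebra is $\langle A,f,g\rangle$ where $A$ is a Boolean algebra with at least two elements (operations $+,\cdot,-,0,1$) and $f,g\colon A^2\to A$ satisfy: $f(x,y)=0$ whenever $x=0$ or $y=0$; $f$ is additive in each argument; $g(x,y)=1$ whenever $x=0$ or $y=0$; $g$ is co-additive in each argument ($g(x+x',y)=g(x,y)\cdot g(x',y)$, $g(x,y+y')=g(x,y)\cdot g(x,y')$). *)

theory Defs
  imports Main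
begin

text \<open>A PS-algebra on a Boolean algebra (type class boolean_algebra, with
 + = sup, \<cdot> = inf, - = uminus, 0 = bot, 1 = top).\<close>

definition ps_algebra :: "('a::boolean_algebra \<Rightarrow> 'a \<Rightarrow> 'a) \<Rightarrow> ('a \<Rightarrow> 'a \<Rightarrow> 'a) \<Rightarrow> bool" where
  "ps_algebra f g \<longleftrightarrow>
     (bot :: 'a) \<noteq> top \<and>
     (\<forall>x y. (x = bot \<or> y = bot) \<longrightarrow> f x y = bot) \<and>
     (\<forall>x x' y. f (sup x x') y = sup (f x y) (f x' y)) \<and>
     (\<forall>x y y'. f x (sup y y') = sup (f x y) (f x y')) \<and>
     (\<forall>x y. (x = bot \<or> y = bot) \<longrightarrow> g x y = top) \<and>
     (\<forall>x x' y. g (sup x x') y = inf (g x y) (g x' y)) \<and>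
     (\<forall>x y y'. g x (sup y y') = inf (g x y) (g x y'))"

definition unary_discriminator :: "('a::boolean_algebra \<Rightarrow> 'a) \<Rightarrow> bool" where
  "unary_discriminator d \<longleftrightarrow> d bot = bot \<and> (\<forall>a. a \<noteq> bot \<longrightarrow> d a = top)"

end

theory Submission
  imports Defs
begin

(* The element d(a) = f(a,a) + -g(a,a) is 1 exactly when g(a,a) <= f(a,a), and d(0) = 0
   always, so d is the discriminator iff g(a,a) <= f(a,a) for every a /= 0.  This diagonal
   condition already implies the off-diagonal one: f is monotone and g antitone in each
   argument, so with c = a*b one gets g(a,b) <= g(c,c) <= f(c,c) <= f(a,b). *)

lemma sup_preserving_imp_mono:
  fixes h :: "'a::semilattice_sup \<Rightarrow> 'b::semilattice_sup"
  assumes "\<And>x y. h (sup x y) = sup (h x) (h y)"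
  shows "mono h"
proof
  fix x y :: 'a
  assume "x \<le> y"
  then have "sup (h x) (h y) = h y"
    using assms[of x y] by (simp add: sup.absorb2)
  then show "h x \<le> h y" by (simp only: le_iff_sup)
qed

lemma sup_to_inf_imp_antimono:
  fixes h :: "'a::semilattice_sup \<Rightarrow> 'b::semilattice_inf"
  assumes "\<And>x y. h (sup x y) = inf (h x) (h y)"
  shows "antimono h"
proof
  fix x y :: 'a
  assume "x \<le> y"
  then have "inf (h x) (h y) = h y"
    using assms[of x y] by (simp add: sup.absorb2)
  then show "h y \<le> h x" by (simp only: le_iff_inf inf.commute)
qed

lemma sup_compl_eq_top_iff: "sup x (- y) = top \<longleftrightarrow> y \<le> (x::'a::boolean_algebra)"
proof
  assume "sup x (- y) = top"
  then have "y = inf y (sup x (- y))" by simp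
  also have "\<dots> = inf y x" by (simp add: inf_sup_distrib1)
  finally show "y \<le> x" by (simp only: le_iff_inf)
next
  assume "y \<le> x"
  then have "sup y (- y) \<le> sup x (- y)" by (rule sup_mono) simp
  then show "sup x (- y) = top" by (simp add: top_unique)
qed

lemma ps_algebra_bot:
  assumes "ps_algebra f g"
  shows "f bot bot = bot" and "g bot bot = top"
  using assms by (simp_all add: ps_algebra_def)

lemma ps_algebra_f_mono:
  assumes "ps_algebra f g" and "x \<le> x'" and "y \<le> y'"
  shows "f x y \<le> f x' y'"
proof -
  have "mono (\<lambda>x. f x y)" and "mono (f x')"
    by (rule sup_preserving_imp_mono, use assms(1) in \<open>simp add: ps_algebra_def\<close>)+
  then have "f x y \<le> f x' y" and "f x' y \<le> f x' y'"
    using assms(2,3) by (blast dest: monoD)+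
  then show ?thesis by (rule order_trans)
qed

lemma ps_algebra_g_antimono:
  assumes "ps_algebra f g" and "x \<le> x'" and "y \<le> y'"
  shows "g x' y' \<le> g x y"
proof -
  have "antimono (\<lambda>x. g x y)" and "antimono (g x')"
    by (rule sup_to_inf_imp_antimono, use assms(1) in \<open>simp add: ps_algebra_def\<close>)+
  then have "g x' y' \<le> g x' y" and "g x' y \<le> g x y"
    using assms(2,3) by (blast dest: antimonoD)+
  then show ?thesis by (rule order_trans)
qed

lemma ps_algebra_le_if_le_at_meet:
  assumes "ps_algebra f g" and "g (inf a b) (inf a b) \<le> f (inf a b) (inf a b)"
  shows "g a b \<le> f a b"
proof -
  have "g a b \<le> g (inf a b) (inf a b)"
    using assms(1) by (rule ps_algebra_g_antimono) simp_all
  also note assms(2)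
  also have "f (inf a b) (inf a b) \<le> f a b"
    using assms(1) by (rule ps_algebra_f_mono) simp_all
  finally show ?thesis .
qed

theorem lemma35:
  fixes f g :: "'a::boolean_algebra \<Rightarrow> 'a \<Rightarrow> 'a"
  assumes "ps_algebra f g"
  shows "unary_discriminator (\<lambda>a. sup (f a a) (- g a a)) \<longleftrightarrow>
         (\<forall>a b. inf a b \<noteq> bot \<longrightarrow> g a b \<le> f a b)"
proof -
  have "sup (f bot bot) (- g bot bot) = bot"
    using ps_algebra_bot[OF assms] by simp
  then have "unary_discriminator (\<lambda>a. sup (f a a) (- g a a)) \<longleftrightarrow>
             (\<forall>a. a \<noteq> bot \<longrightarrow> g a a \<le> f a a)"
    unfolding unary_discriminator_def sup_compl_eq_top_iff by simp
  also have "\<dots> \<longleftrightarrow> (\<forall>a b. inf a b \<noteq> bot \<longrightarrow> g a b \<le> f a b)"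
    using ps_algebra_le_if_le_at_meet[OF assms] by (metis inf.idem)
  finally show ?thesis .
qed

end
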